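(* Let $X,Y$ be locally compact Hausdorff spaces, $p\colon X\to Y$ a continuous proper map, and $\mu_X$ a positive Radon measure on $X$. Let $A\subset C_0(Y)$ be a dense $\mathbb{C}$-subalgebra, and let $M\subset\mathcal{L}^1(X,\mu_X)$ be a $p^*A$-module under pointwise multiplication, stable under complex conjugation, such that for every $m\in M$ there exists $n\in M$ with $|m|\le n$. Then for every $m\in M$ and every $c\in C_0(Y)$, the function $(c\circ p)\,m$ lies in $\overline{M}^{\tau_M}$.
   Context: $p^*A=\{a\circ p: a\in A\}$. For a linear subspace $M\subset\mathcal{L}^1(X,\mu_X)$ stable under complex conjugation, $\overline{M}^{\tau_M}$ denotes the set of $h\in\mathcal{L}^1(X,\mu_X)$ such that for every $\epsilon>0$ there exist $m_1,m_2\in M$ with $|h-m_1|\le m_2$ pointwise and $\mu_X(m_2)<\epsilon$ (the closure of $M$ in the linear topology $\tau_M$ with neighborhoods of $0$ given by $\{h: \exists m\in M,\ |h|\le m,\ \mu_X(m)<\epsilon\}$). *)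

theory Defs
  imports "HOL-Analysis.Analysis"
begin

definition C0 :: "('y::topological_space \<Rightarrow> complex) set" where
  "C0 = {c. continuous_on UNIV c \<and>
            (\<forall>e>0. compact {y. cmod (c y) \<ge> e})}"

definition complex_subalgebra_C0 :: "('y::topological_space \<Rightarrow> complex) set \<Rightarrow> bool" where
  "complex_subalgebra_C0 A \<longleftrightarrow> A \<subseteq> C0 \<and> (\<lambda>_. 0) \<in> A \<and>
     (\<forall>a\<in>A. \<forall>b\<in>A. (\<lambda>y. a y + b y) \<in> A \<and> (\<lambda>y. a y * b y) \<in> A) \<and>
     (\<forall>a\<in>A. \<forall>z::complex. (\<lambda>y. z * a y) \<in> A)"

definition dense_in_C0 :: "('y::topological_space \<Rightarrow> complex) set \<Rightarrow> bool" where
  "dense_in_C0 A \<longleftrightarrow> (\<forall>c\<in>C0. \<forall>e>0. \<exists>a\<in>A. \<forall>y. cmod (c y - a y) \<le> e)"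

definition radon_measure :: "'x::topological_space measure \<Rightarrow> bool" where
  "radon_measure mu \<longleftrightarrow> sets mu = sets borel \<and>
     (\<forall>K. compact K \<longrightarrow> emeasure mu K < \<infinity>) \<and>
     (\<forall>B\<in>sets borel. emeasure mu B = (INF U\<in>{U. open U \<and> B \<subseteq> U}. emeasure mu U)) \<and>
     (\<forall>U. open U \<longrightarrow> emeasure mu U = (SUP K\<in>{K. compact K \<and> K \<subseteq> U}. emeasure mu K))"

definition cdom :: "('x \<Rightarrow> complex) \<Rightarrow> ('x \<Rightarrow> complex) \<Rightarrow> bool" where
  "cdom f g \<longleftrightarrow> (\<forall>x. g x \<in> \<real> \<and> cmod (f x) \<le> Re (g x))"

definition tau_closure :: "'x measure \<Rightarrow> ('x \<Rightarrow> complex) set \<Rightarrow> ('x \<Rightarrow> complex) set" where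
  "tau_closure mu M = {h. integrable mu h \<and>
     (\<forall>e>0. \<exists>m1\<in>M. \<exists>m2\<in>M. cdom (\<lambda>x. h x - m1 x) m2 \<and> Re (integral\<^sup>L mu m2) < e)}"

end

theory Submission
  imports Defs
begin

text \<open>Choose \<open>n \<in> M\<close> with \<open>|m| \<le> n\<close> and \<open>a \<in> A\<close> with \<open>\<parallel>c - a\<parallel>\<^sub>\<infinity> \<le> d\<close>. Then
  \<open>(a \<circ> p) m \<in> M\<close> and \<open>|(c \<circ> p) m - (a \<circ> p) m| \<le> d n\<close> with \<open>d n \<in> M\<close>, whose integral
  \<open>d \<integral>n\<close> is as small as we like.\<close>

lemma cdom_mult_bounded:
  assumes "cdom f g" and "\<And>x. cmod (u x) \<le> d"
  shows "cdom (\<lambda>x. u x * f x) (\<lambda>x. complex_of_real d * g x)"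
  unfolding cdom_def
proof
  fix x
  have g_real: "g x \<in> \<real>" and f_le: "cmod (f x) \<le> Re (g x)"
    using assms(1) by (auto simp: cdom_def)
  have "cmod (u x * f x) \<le> d * Re (g x)"
    unfolding norm_mult using assms(2) f_le order_trans[OF norm_ge_zero assms(2)]
    by (intro mult_mono) auto
  then show "complex_of_real d * g x \<in> \<real> \<and> cmod (u x * f x) \<le> Re (complex_of_real d * g x)"
    using g_real by (auto simp: Reals_def simp flip: of_real_mult)
qed

lemma integrable_if_cdom_diff:
  fixes h :: "'x \<Rightarrow> complex"
  assumes "h \<in> borel_measurable mu" "integrable mu f" "integrable mu g"
    and "cdom (\<lambda>x. h x - f x) g"
  shows "integrable mu h"
proof (rule Bochner_Integration.integrable_bound[OF _ assms(1)])
  show "integrable mu (\<lambda>x. cmod (f x) + cmod (g x))"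
    using assms(2,3) by (intro Bochner_Integration.integrable_add integrable_norm)
  show "AE x in mu. norm (h x) \<le> norm (cmod (f x) + cmod (g x))"
  proof (rule AE_I2)
    fix x
    have "cmod (h x - f x) \<le> cmod (g x)"
      using assms(4) complex_Re_le_cmod[of "g x"] unfolding cdom_def by (meson order_trans)
    then show "norm (h x) \<le> norm (cmod (f x) + cmod (g x))"
      using norm_triangle_ineq2[of "h x" "f x"] by simp
  qed
qed

lemma tau_closureI_scaled_dominant:
  fixes h :: "'x \<Rightarrow> complex"
  assumes M_int: "M \<subseteq> {f. integrable mu f}"
    and M_scale: "\<And>f z. f \<in> M \<Longrightarrow> (\<lambda>x. z * f x) \<in> M"
    and nM: "n \<in> M" and h_meas: "h \<in> borel_measurable mu"
    and approx: "\<And>d. d > 0 \<Longrightarrow> \<exists>f\<in>M. cdom (\<lambda>x. h x - f x) (\<lambda>x. complex_of_real d * n x)"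
  shows "h \<in> tau_closure mu M"
proof -
  have n_int: "integrable mu n" using M_int nM by auto
  have small: "\<exists>f\<in>M. \<exists>g\<in>M. cdom (\<lambda>x. h x - f x) g \<and> Re (integral\<^sup>L mu g) < e"
    if "e > 0" for e :: real
  proof -
    define d where "d = e / (\<bar>Re (integral\<^sup>L mu n)\<bar> + 1)"
    have d_pos: "d > 0" using that by (simp add: d_def)
    obtain f where "f \<in> M" and f_approx: "cdom (\<lambda>x. h x - f x) (\<lambda>x. complex_of_real d * n x)"
      using approx[OF d_pos] by blast
    have "Re (integral\<^sup>L mu (\<lambda>x. complex_of_real d * n x)) = d * Re (integral\<^sup>L mu n)"
      by simp
    also have "\<dots> < d * (\<bar>Re (integral\<^sup>L mu n)\<bar> + 1)"
      using d_pos by (intro mult_strict_left_mono) auto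
    also have "\<dots> = e" by (simp add: d_def)
    finally show ?thesis
      using \<open>f \<in> M\<close> f_approx M_scale[OF nM] by blast
  qed
  obtain f g where "f \<in> M" "g \<in> M" "cdom (\<lambda>x. h x - f x) g"
    using small[of 1] by auto
  then have "integrable mu h"
    using M_int h_meas by (intro integrable_if_cdom_diff[of h mu f g]) auto
  with small show ?thesis unfolding tau_closure_def by blast
qed

lemma borel_measurable_C0_comp:
  assumes "c \<in> C0" "continuous_on UNIV p" "sets mu = sets borel"
  shows "(\<lambda>x. c (p x)) \<in> borel_measurable mu"
proof -
  have "continuous_on UNIV (\<lambda>x. c (p x))"
    using assms(1,2) unfolding C0_def by (auto intro: continuous_on_compose2[of UNIV c UNIV p])
  then show ?thesis
    by (subst measurable_cong_sets[OF assms(3) refl]) (rule borel_measurable_continuous_onI)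
qed

theorem mainTheorem7:
  fixes p :: "'x::t2_space \<Rightarrow> 'y::t2_space"
    and mu :: "'x measure"
    and A :: "('y \<Rightarrow> complex) set"
    and M :: "('x \<Rightarrow> complex) set"
  assumes "locally_compact_space (euclidean :: 'x topology)"
    and "locally_compact_space (euclidean :: 'y topology)"
    and "continuous_on UNIV p"
    and "proper_map euclidean euclidean p"
    and "radon_measure mu"
    and "complex_subalgebra_C0 A"
    and "dense_in_C0 A"
    and "M \<subseteq> {f. integrable mu f}"
    and "(\<lambda>_. 0) \<in> M"
    and "\<And>f g. f \<in> M \<Longrightarrow> g \<in> M \<Longrightarrow> (\<lambda>x. f x + g x) \<in> M"
    and "\<And>f z. f \<in> M \<Longrightarrow> (\<lambda>x. z * f x) \<in> M"
    and "\<And>a f. a \<in> A \<Longrightarrow> f \<in> M \<Longrightarrow> (\<lambda>x. a (p x) * f x) \<in> M"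
    and "\<And>f. f \<in> M \<Longrightarrow> (\<lambda>x. cnj (f x)) \<in> M"
    and "\<And>m. m \<in> M \<Longrightarrow> \<exists>n\<in>M. cdom m n"
  shows "\<forall>m\<in>M. \<forall>c\<in>C0. (\<lambda>x. c (p x) * m x) \<in> tau_closure mu M"
proof (intro ballI)
  fix m :: "'x \<Rightarrow> complex" and c :: "'y \<Rightarrow> complex"
  assume mM: "m \<in> M" and cC0: "c \<in> C0"
  obtain n where "n \<in> M" and m_dom: "cdom m n" using assms(14) mM by blast
  have "sets mu = sets borel" using assms(5) by (simp add: radon_measure_def)
  then have "(\<lambda>x. c (p x) * m x) \<in> borel_measurable mu"
    using borel_measurable_C0_comp[OF cC0 assms(3)] assms(8) mM by auto
  moreover have "\<exists>f\<in>M. cdom (\<lambda>x. c (p x) * m x - f x) (\<lambda>x. complex_of_real d * n x)"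
    if d_pos: "d > 0" for d
  proof -
    obtain a where "a \<in> A" and "\<And>y. cmod (c y - a y) \<le> d"
      using assms(7) cC0 d_pos unfolding dense_in_C0_def by blast
    then have "cdom (\<lambda>x. (c (p x) - a (p x)) * m x) (\<lambda>x. complex_of_real d * n x)"
      using m_dom by (intro cdom_mult_bounded) auto
    then show ?thesis
      using assms(12)[OF \<open>a \<in> A\<close> mM] by (auto simp: algebra_simps)
  qed
  ultimately show "(\<lambda>x. c (p x) * m x) \<in> tau_closure mu M"
    using \<open>n \<in> M\<close> assms(8,11) by (intro tau_closureI_scaled_dominant) auto
qed

end
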